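(* Let $Q_1,\dots,Q_k\colon\{0,1\}^m\to\{0,1\}$ and $Q^*\colon\{0,1\}^m\to S$ be functions with $S$ a finite set, and fix $\Gamma\colon\{0,1\}^k\times S\to\{0,1\}^n$. For $\sigma\in S$ let $\Gamma_\sigma\colon\{0,1\}^k\to\{0,1\}^n$ be $\Gamma_\sigma(x_1,\dots,x_k)=\Gamma(x_1,\dots,x_k,\sigma)$. Let $X$ be uniform on $\{0,1\}^m$ and $\mathcal{Y}$ a distribution on $\{0,1\}^n$ such that $\|\Gamma_\sigma(Q_1(X),\dots,Q_k(X))-\mathcal{Y}\|_{\mathtt{TV}}\ge1-\varepsilon$ for all $\sigma\in S$, and suppose $\Pr[Q^*(X)=\sigma]\ge\tau$ for all $\sigma\in S$. Then \[ \|\Gamma(Q_1(X),\dots,Q_k(X),Q^*(X))-\mathcal{Y}\|_{\mathtt{TV}}\ \ge\ 1-\frac{4\varepsilon|S|}{\tau}. \]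
   Context: Total variation distance: $\frac12\sum_x|\mathcal{D}_1(x)-\mathcal{D}_2(x)|$. *)

theory Defs
  imports "HOL-Analysis.Analysis" "HOL-Probability.Probability_Mass_Function"
begin

definition tv_dist :: "'a pmf \<Rightarrow> 'a pmf \<Rightarrow> real" where
  "tv_dist D1 D2 = (1/2) * infsum (\<lambda>x. \<bar>pmf D1 x - pmf D2 x\<bar>) UNIV"

definition bits :: "nat \<Rightarrow> bool list set" where
  "bits m = {xs. length xs = m}"

end

theory Submission
  imports Defs
begin

text \<open>
  Each far-ness hypothesis is witnessed by a set \<open>A\<^sub>\<sigma>\<close> with \<open>Y(A\<^sub>\<sigma>) \<le> \<epsilon>\<close> and
  \<open>Pr[\<Gamma>\<^sub>\<sigma>(Q(X)) \<notin> A\<^sub>\<sigma>] \<le> \<epsilon>\<close>. The union \<open>A\<close> of these sets has \<open>Y\<close>-mass at most \<open>|S|\<epsilon>\<close>,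
  and \<open>\<Gamma>(Q(X), Q\<^sup>*(X))\<close> can only miss \<open>A\<close> if \<open>\<Gamma>\<^sub>\<sigma>(Q(X)) \<notin> A\<^sub>\<sigma>\<close> for some \<open>\<sigma>\<close>, an event of
  probability at most \<open>|S|\<epsilon>\<close> by the union bound. So the distance is even at least
  \<open>1 - 2|S|\<epsilon>\<close>; the balance hypothesis only enters through \<open>\<tau> \<le> 1\<close>.
\<close>

lemma measure_pmf_eq_sum_Int:
  assumes "finite B" "set_pmf p \<subseteq> B"
  shows "measure_pmf.prob p A = (\<Sum>x\<in>B \<inter> A. pmf p x)"
proof -
  have "measure_pmf.prob p A = measure_pmf.prob p (A \<inter> set_pmf p)"
    by (simp add: measure_Int_set_pmf)
  also have "A \<inter> set_pmf p = (B \<inter> A) \<inter> set_pmf p"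
    using assms(2) by auto
  also have "measure_pmf.prob p \<dots> = measure_pmf.prob p (B \<inter> A)"
    by (simp add: measure_Int_set_pmf)
  finally show ?thesis
    using assms(1) by (simp add: measure_measure_pmf_finite)
qed

lemma tv_dist_finite_support:
  assumes "finite B" "set_pmf p \<subseteq> B" "set_pmf q \<subseteq> B"
  shows "tv_dist p q = 1/2 * (\<Sum>x\<in>B. \<bar>pmf p x - pmf q x\<bar>)"
proof -
  have "pmf p x = 0" "pmf q x = 0" if "x \<notin> B" for x
    using assms(2,3) that by (auto simp: pmf_eq_0_set_pmf)
  then have "infsum (\<lambda>x. \<bar>pmf p x - pmf q x\<bar>) UNIV = infsum (\<lambda>x. \<bar>pmf p x - pmf q x\<bar>) B"
    by (intro infsum_cong_neutral) auto
  then show ?thesis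
    using assms(1) by (simp add: tv_dist_def)
qed

text \<open>Both halves equal \<open>p(A) - q(A)\<close>, because \<open>p\<close> and \<open>q\<close> have the same total mass.\<close>

lemma prob_diff_eq_half_sums:
  assumes "finite B" "set_pmf p \<subseteq> B" "set_pmf q \<subseteq> B"
  shows "measure_pmf.prob p A - measure_pmf.prob q A =
    1/2 * ((\<Sum>x\<in>B \<inter> A. pmf p x - pmf q x) + (\<Sum>x\<in>B - A. pmf q x - pmf p x))"
proof -
  have total: "(\<Sum>x\<in>B \<inter> A. pmf r x) + (\<Sum>x\<in>B - A. pmf r x) = 1"
    if "set_pmf r \<subseteq> B" for r :: "'a pmf"
    using assms(1) sum_pmf_eq_1[OF assms(1) that] by (metis sum.Int_Diff)
  show ?thesis
    using total[OF assms(2)] total[OF assms(3)]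
      measure_pmf_eq_sum_Int[OF assms(1,2)] measure_pmf_eq_sum_Int[OF assms(1,3)]
    by (simp add: sum_subtractf)
qed

lemma prob_diff_le_tv_dist:
  assumes "finite B" "set_pmf p \<subseteq> B" "set_pmf q \<subseteq> B"
  shows "measure_pmf.prob p A - measure_pmf.prob q A \<le> tv_dist p q"
proof -
  let ?d = "\<lambda>x. \<bar>pmf p x - pmf q x\<bar>"
  have "(\<Sum>x\<in>B \<inter> A. pmf p x - pmf q x) + (\<Sum>x\<in>B - A. pmf q x - pmf p x)
      \<le> sum ?d (B \<inter> A) + sum ?d (B - A)"
    by (intro add_mono sum_mono) auto
  also have "\<dots> = sum ?d B"
    using assms(1) by (metis sum.Int_Diff)
  finally show ?thesis
    using prob_diff_eq_half_sums[OF assms, of A] tv_dist_finite_support[OF assms] by argo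
qed

lemma tv_dist_eq_prob_diff:
  assumes "finite B" "set_pmf p \<subseteq> B" "set_pmf q \<subseteq> B"
  defines "A \<equiv> {x. pmf q x \<le> pmf p x}"
  shows "tv_dist p q = measure_pmf.prob p A - measure_pmf.prob q A"
proof -
  let ?d = "\<lambda>x. \<bar>pmf p x - pmf q x\<bar>"
  have "sum ?d B = sum ?d (B \<inter> A) + sum ?d (B - A)"
    using assms(1) by (metis sum.Int_Diff)
  also have "\<dots> = (\<Sum>x\<in>B \<inter> A. pmf p x - pmf q x) + (\<Sum>x\<in>B - A. pmf q x - pmf p x)"
    by (intro arg_cong2[where f = "(+)"] sum.cong) (auto simp: A_def)
  finally show ?thesis
    using prob_diff_eq_half_sums[OF assms(1-3), of A] tv_dist_finite_support[OF assms(1-3)] by argo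
qed

lemma tv_dist_le_1:
  assumes "finite B" "set_pmf p \<subseteq> B" "set_pmf q \<subseteq> B"
  shows "tv_dist p q \<le> 1"
proof -
  let ?A = "{x. pmf q x \<le> pmf p x}"
  show ?thesis
    using tv_dist_eq_prob_diff[OF assms] measure_pmf.prob_le_1[of p ?A] measure_nonneg[of q ?A]
    by linarith
qed

lemma tv_dist_ge_obtains_separating_set:
  assumes "finite B" "set_pmf p \<subseteq> B" "set_pmf q \<subseteq> B"
    and "tv_dist p q \<ge> 1 - \<epsilon>"
  obtains A where "measure_pmf.prob p (- A) \<le> \<epsilon>" "measure_pmf.prob q A \<le> \<epsilon>"
proof
  define A where "A = {x. pmf q x \<le> pmf p x}"
  have "1 - \<epsilon> \<le> measure_pmf.prob p A - measure_pmf.prob q A"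
    using assms(4) tv_dist_eq_prob_diff[OF assms(1-3)] by (simp add: A_def)
  moreover have "measure_pmf.prob p (- A) = 1 - measure_pmf.prob p A"
    using measure_pmf.prob_compl[of A p] by (simp add: Compl_eq_Diff_UNIV)
  ultimately show "measure_pmf.prob p (- A) \<le> \<epsilon>" "measure_pmf.prob q A \<le> \<epsilon>"
    using measure_pmf.prob_le_1[of p A] measure_nonneg[of q A] by linarith+
qed

lemma measure_pmf_UN_le_card_mult:
  assumes "finite S" "\<And>\<sigma>. \<sigma> \<in> S \<Longrightarrow> measure_pmf.prob M (E \<sigma>) \<le> \<epsilon>"
  shows "measure_pmf.prob M (\<Union>\<sigma>\<in>S. E \<sigma>) \<le> real (card S) * \<epsilon>"
proof -
  have "measure_pmf.prob M (\<Union>\<sigma>\<in>S. E \<sigma>) \<le> (\<Sum>\<sigma>\<in>S. measure_pmf.prob M (E \<sigma>))"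
    using assms(1) by (intro measure_pmf.finite_measure_subadditive_finite) auto
  also have "\<dots> \<le> real (card S) * \<epsilon>"
    using sum_bounded_above[of S "\<lambda>\<sigma>. measure_pmf.prob M (E \<sigma>)" \<epsilon>] assms(2) by simp
  finally show ?thesis .
qed

lemma tv_dist_map_pmf_choice_ge:
  fixes f :: "'x \<Rightarrow> 's \<Rightarrow> 'b" and c :: "'x \<Rightarrow> 's"
  assumes "finite S" "finite B"
    and c_in: "\<And>x. x \<in> set_pmf U \<Longrightarrow> c x \<in> S"
    and f_in: "\<And>x \<sigma>. x \<in> set_pmf U \<Longrightarrow> \<sigma> \<in> S \<Longrightarrow> f x \<sigma> \<in> B"
    and Y_in: "set_pmf Y \<subseteq> B"
    and far: "\<And>\<sigma>. \<sigma> \<in> S \<Longrightarrow> tv_dist (map_pmf (\<lambda>x. f x \<sigma>) U) Y \<ge> 1 - \<epsilon>"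
  shows "tv_dist (map_pmf (\<lambda>x. f x (c x)) U) Y \<ge> 1 - 2 * real (card S) * \<epsilon>"
proof -
  have "\<exists>A. measure_pmf.prob U {x. f x \<sigma> \<notin> A} \<le> \<epsilon> \<and> measure_pmf.prob Y A \<le> \<epsilon>"
    if \<sigma>: "\<sigma> \<in> S" for \<sigma>
  proof -
    have "set_pmf (map_pmf (\<lambda>x. f x \<sigma>) U) \<subseteq> B"
      using f_in \<sigma> by auto
    then obtain A where "measure_pmf.prob (map_pmf (\<lambda>x. f x \<sigma>) U) (- A) \<le> \<epsilon>"
        "measure_pmf.prob Y A \<le> \<epsilon>"
      using tv_dist_ge_obtains_separating_set assms(2) Y_in far[OF \<sigma>] by metis
    then show ?thesis
      by (auto simp: vimage_def)
  qed
  then obtain A where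
    miss: "\<And>\<sigma>. \<sigma> \<in> S \<Longrightarrow> measure_pmf.prob U {x. f x \<sigma> \<notin> A \<sigma>} \<le> \<epsilon>" and
    Y_A: "\<And>\<sigma>. \<sigma> \<in> S \<Longrightarrow> measure_pmf.prob Y (A \<sigma>) \<le> \<epsilon>"
    by metis
  define A\<^sub>S where "A\<^sub>S = (\<Union>\<sigma>\<in>S. A \<sigma>)"
  define D where "D = map_pmf (\<lambda>x. f x (c x)) U"
  have Y_A\<^sub>S: "measure_pmf.prob Y A\<^sub>S \<le> real (card S) * \<epsilon>"
    unfolding A\<^sub>S_def using assms(1) Y_A by (rule measure_pmf_UN_le_card_mult)
  have "measure_pmf.prob D (- A\<^sub>S) = measure_pmf.prob U ({x. f x (c x) \<notin> A\<^sub>S} \<inter> set_pmf U)"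
    by (simp add: D_def measure_Int_set_pmf vimage_def)
  also have "\<dots> \<le> measure_pmf.prob U (\<Union>\<sigma>\<in>S. {x. f x \<sigma> \<notin> A \<sigma>})"
    by (intro measure_pmf.finite_measure_mono) (auto simp: A\<^sub>S_def dest: c_in)
  also have "\<dots> \<le> real (card S) * \<epsilon>"
    using assms(1) miss by (rule measure_pmf_UN_le_card_mult)
  finally have D_miss: "measure_pmf.prob D (- A\<^sub>S) \<le> real (card S) * \<epsilon>" .
  have "set_pmf D \<subseteq> B"
    using c_in f_in by (auto simp: D_def)
  then have "measure_pmf.prob D A\<^sub>S - measure_pmf.prob Y A\<^sub>S \<le> tv_dist D Y"
    using prob_diff_le_tv_dist assms(2) Y_in by blast
  moreover have "measure_pmf.prob D (- A\<^sub>S) = 1 - measure_pmf.prob D A\<^sub>S"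
    using measure_pmf.prob_compl[of A\<^sub>S D] by (simp add: Compl_eq_Diff_UNIV)
  ultimately show ?thesis
    using Y_A\<^sub>S D_miss by (simp add: D_def)
qed

lemma finite_bits: "finite (bits n)"
  using finite_lists_length_eq[of "UNIV :: bool set" n] by (simp add: bits_def)

lemma bits_nonempty: "bits n \<noteq> {}"
  by (auto simp: bits_def intro!: exI[of _ "replicate n True"])

theorem lemma3p6:
  fixes m k n :: nat
    and Q :: "nat \<Rightarrow> bool list \<Rightarrow> bool"
    and Qs :: "bool list \<Rightarrow> 's"
    and S :: "'s set"
    and \<Gamma> :: "bool list \<Rightarrow> 's \<Rightarrow> bool list"
    and Y :: "bool list pmf"
    and \<epsilon> \<tau> :: real
  assumes S_fin: "finite S"
    and Qs_range: "\<And>x. x \<in> bits m \<Longrightarrow> Qs x \<in> S"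
    and Gamma_range: "\<And>y \<sigma>. y \<in> bits k \<Longrightarrow> \<sigma> \<in> S \<Longrightarrow> \<Gamma> y \<sigma> \<in> bits n"
    and Y_supp: "set_pmf Y \<subseteq> bits n"
    and far: "\<And>\<sigma>. \<sigma> \<in> S \<Longrightarrow>
       tv_dist (map_pmf (\<lambda>x. \<Gamma> (map (\<lambda>i. Q i x) [1..<k+1]) \<sigma>) (pmf_of_set (bits m))) Y
         \<ge> 1 - \<epsilon>"
    and tau_pos: "\<tau> > 0"
    and balanced: "\<And>\<sigma>. \<sigma> \<in> S \<Longrightarrow>
       measure_pmf.prob (pmf_of_set (bits m)) {x. Qs x = \<sigma>} \<ge> \<tau>"
  shows "tv_dist (map_pmf (\<lambda>x. \<Gamma> (map (\<lambda>i. Q i x) [1..<k+1]) (Qs x)) (pmf_of_set (bits m))) Y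
         \<ge> 1 - 4 * \<epsilon> * real (card S) / \<tau>"
proof -
  let ?U = "pmf_of_set (bits m)" and ?q = "\<lambda>x. map (\<lambda>i. Q i x) [1..<k+1]"
  have set_U: "set_pmf ?U = bits m"
    using finite_bits bits_nonempty by simp
  have q_in: "?q x \<in> bits k" for x
    by (simp add: bits_def)
  have dist: "tv_dist (map_pmf (\<lambda>x. \<Gamma> (?q x) (Qs x)) ?U) Y \<ge> 1 - 2 * real (card S) * \<epsilon>"
    using S_fin finite_bits Qs_range Gamma_range[OF q_in] Y_supp far
    by (intro tv_dist_map_pmf_choice_ge) (auto simp: set_U)
  obtain \<sigma> where "\<sigma> \<in> S"
    using bits_nonempty Qs_range by blast
  have "set_pmf (map_pmf (\<lambda>x. \<Gamma> (?q x) \<sigma>) ?U) \<subseteq> bits n"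
    using Gamma_range[OF q_in \<open>\<sigma> \<in> S\<close>] by auto
  then have "tv_dist (map_pmf (\<lambda>x. \<Gamma> (?q x) \<sigma>) ?U) Y \<le> 1"
    using tv_dist_le_1 finite_bits Y_supp by blast
  then have "\<epsilon> \<ge> 0"
    using far[OF \<open>\<sigma> \<in> S\<close>] by linarith
  have "\<tau> \<le> 1"
    using balanced[OF \<open>\<sigma> \<in> S\<close>] measure_pmf.prob_le_1[of ?U "{x. Qs x = \<sigma>}"] by linarith
  then have "real (card S) * \<epsilon> \<le> real (card S) * \<epsilon> / \<tau>"
    using divide_left_mono[of \<tau> 1 "real (card S) * \<epsilon>"] \<open>\<epsilon> \<ge> 0\<close> tau_pos by simp
  moreover have "0 \<le> real (card S) * \<epsilon> / \<tau>"
    using \<open>\<epsilon> \<ge> 0\<close> tau_pos by simp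
  moreover have "4 * \<epsilon> * real (card S) / \<tau> = 4 * (real (card S) * \<epsilon> / \<tau>)"
    by simp
  ultimately show ?thesis
    using dist by linarith
qed

end
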